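(* Let $R$ be an arbitrary unital associative ring and let $$ A=\left(\begin{array}{ccc} 1&1&1\\ 1&a&b\\ 1&c&d \end{array}\right)\in M_3(R) \quad \text{and}\quad B=\left(\begin{array}{cc} a-1&b-1\\ c-1&d-1 \end{array}\right)\in M_2(R). $$ Then $A$ is invertible if and only if $B$ is invertible. Moreover, if $B$ is invertible and $$ B^{-1}=\left(\begin{array}{cc} s&t\\ u&v \end{array}\right), $$ then the inverse of $A$ is given by the formula $$ A^{-1}=\left(\begin{array}{ccc} 1+s+t+u+v&-s-u&-t-v\\ -s-t&s&t\\ -u-v&u&v \end{array}\right). $$ Furthermore, if $a-1$, $b-1$, $c-1$ and $d-1$ are invertible, then $s$, $t$, $u$ and $v$ are given by $$ \begin{array}{ll} s=((a-1)-(b-1)(d-1)^{-1}(c-1))^{-1},&\ \ \ t=((c-1)-(d-1)(b-1)^{-1}(a-1))^{-1}, \\ u=((b-1)-(a-1)(c-1)^{-1}(d-1))^{-1},&\ \ \ v=((d-1)-(c-1)(a-1)^{-1}(b-1))^{-1} \end{array} $$ (thus providing an explicit expression of $A^{-1}$ in terms of $a$, $b$, $c$ and $d$).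
   Context: $R$ is an arbitrary unital associative ring, $M_n(R)$ denotes $n\times n$ matrices over $R$. The matrix $A$ is a $3\times 3$ matrix whose first row and first column consist of $1$'s (i.e. $A$ lies in the set of $3\times 3$ matrices with all entries of the first row and first column equal to $1$). *)

theory Defs
  imports "HOL-Analysis.Analysis"
begin

definition ring_invertible :: "'a::ring_1 \<Rightarrow> bool" where
  "ring_invertible x \<longleftrightarrow> (\<exists>y. x * y = 1 \<and> y * x = 1)"

definition ring_inv :: "'a::ring_1 \<Rightarrow> 'a" where
  "ring_inv x = (THE y. x * y = 1 \<and> y * x = 1)"

definition matA :: "'a::ring_1 \<Rightarrow> 'a \<Rightarrow> 'a \<Rightarrow> 'a \<Rightarrow> 'a^3^3" where
  "matA a b c d = vector [vector [1, 1, 1], vector [1, a, b], vector [1, c, d]]"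

definition matB :: "'a::ring_1 \<Rightarrow> 'a \<Rightarrow> 'a \<Rightarrow> 'a \<Rightarrow> 'a^2^2" where
  "matB a b c d = vector [vector [a - 1, b - 1], vector [c - 1, d - 1]]"

end

theory Submission imports Defs begin

text \<open>With \<open>p = a - 1, q = b - 1, r = c - 1, w = d - 1\<close>, subtracting the first row (resp. column)
  of \<open>A\<close> from the other two leaves \<open>B\<close> in the lower right corner. Hence the lower right
  2\<times>2 block of any inverse of \<open>A\<close> is an inverse of \<open>B\<close>, and conversely an inverse
  \<open>(s t; u v)\<close> of \<open>B\<close> is completed to the inverse of \<open>A\<close> displayed in the statement,
  which is checked by multiplying out. The four formulas for \<open>s, t, u, v\<close> are one Schur
  complement identity, applied to \<open>B\<close> with its rows and/or columns swapped.\<close>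

lemma ring_inv_eqI:
  fixes x y :: "'a::ring_1"
  assumes "x * y = 1" and "y * x = 1"
  shows "ring_invertible x" and "ring_inv x = y"
proof -
  show "ring_invertible x" using assms unfolding ring_invertible_def by blast
  show "ring_inv x = y" unfolding ring_inv_def
  proof (rule the_equality)
    fix y' assume y': "x * y' = 1 \<and> y' * x = 1"
    have "y' = y' * (x * y)" using assms(1) by simp
    also have "\<dots> = y" using y' by (simp flip: mult.assoc)
    finally show "y' = y" .
  qed (use assms in simp)
qed

lemma ring_inv_right: "ring_invertible x \<Longrightarrow> x * ring_inv x = 1"
  and ring_inv_left: "ring_invertible x \<Longrightarrow> ring_inv x * x = 1"
  by (metis ring_invertible_def ring_inv_eqI(2))+

lemma matrix_inv_eqI:
  fixes A :: "'a::semiring_1^'n^'m"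
  assumes "A ** X = mat 1" and "X ** A = mat 1"
  shows "matrix_inv A = X"
proof -
  have "A ** matrix_inv A = mat 1" and "matrix_inv A ** A = mat 1"
    using someI_ex[of "\<lambda>Y. A ** Y = mat 1 \<and> Y ** A = mat 1"] assms
    unfolding matrix_inv_def by blast+
  then have "X = X ** (A ** matrix_inv A)"
    by (simp add: matrix_mul_rid)
  with assms(2) show ?thesis by (simp add: matrix_mul_assoc matrix_mul_lid)
qed

lemma matrix_inv_right: "invertible A \<Longrightarrow> A ** matrix_inv A = mat 1"
  and matrix_inv_left: "invertible A \<Longrightarrow> matrix_inv A ** A = mat 1"
  unfolding invertible_def matrix_inv_def by (metis (mono_tags, lifting) someI_ex)+

definition inverse_2x2 :: "'a::ring_1 \<Rightarrow> 'a \<Rightarrow> 'a \<Rightarrow> 'a \<Rightarrow> 'a \<Rightarrow> 'a \<Rightarrow> 'a \<Rightarrow> 'a \<Rightarrow> bool" where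
  "inverse_2x2 p q r w s t u v \<longleftrightarrow>
     p * s + q * u = 1 \<and> p * t + q * v = 0 \<and> r * s + w * u = 0 \<and> r * t + w * v = 1 \<and>
     s * p + t * r = 1 \<and> s * q + t * w = 0 \<and> u * p + v * r = 0 \<and> u * q + v * w = 1"

lemma inverse_2x2_swap_rows:
  "inverse_2x2 p q r w s t u v \<Longrightarrow> inverse_2x2 r w p q t s v u"
  unfolding inverse_2x2_def by (auto simp: add.commute)

lemma inverse_2x2_swap_cols:
  "inverse_2x2 p q r w s t u v \<Longrightarrow> inverse_2x2 q p w r u v s t"
  unfolding inverse_2x2_def by (auto simp: add.commute)

lemma inverse_2x2_Schur:
  fixes p q r w s t u v :: "'a::ring_1"
  assumes inv: "inverse_2x2 p q r w s t u v" and "ring_invertible w"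
  shows "ring_invertible (p - q * ring_inv w * r)" and "ring_inv (p - q * ring_inv w * r) = s"
proof -
  let ?w' = "ring_inv w"
  have w: "w * ?w' = 1" "?w' * w = 1"
    using \<open>ring_invertible w\<close> by (simp_all add: ring_inv_right ring_inv_left)
  have "?w' * r * s + u = ?w' * (r * s + w * u)"
    using w by (simp add: distrib_left flip: mult.assoc)
  then have u: "u = - (?w' * r * s)"
    using inv unfolding inverse_2x2_def by (simp add: eq_neg_iff_add_eq_0 add.commute)
  have "s * q * ?w' + t = (s * q + t * w) * ?w'"
    using w by (simp add: distrib_right mult.assoc)
  then have t: "t = - (s * q * ?w')"
    using inv unfolding inverse_2x2_def by (simp add: eq_neg_iff_add_eq_0 add.commute)
  have "(p - q * ?w' * r) * s = p * s + q * u"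
    using u by (simp add: left_diff_distrib mult.assoc)
  then have left: "(p - q * ?w' * r) * s = 1"
    using inv unfolding inverse_2x2_def by simp
  have "s * (p - q * ?w' * r) = s * p + t * r"
    using t by (simp add: right_diff_distrib mult.assoc)
  then have right: "s * (p - q * ?w' * r) = 1"
    using inv unfolding inverse_2x2_def by simp
  show "ring_invertible (p - q * ?w' * r)" and "ring_inv (p - q * ?w' * r) = s"
    using ring_inv_eqI[OF left right] by simp_all
qed

lemma matB_inverse_iff:
  fixes a b c d :: "'a::ring_1"
  shows "matB a b c d ** Z = mat 1 \<and> Z ** matB a b c d = mat 1 \<longleftrightarrow>
    inverse_2x2 (a - 1) (b - 1) (c - 1) (d - 1) (Z$1$1) (Z$1$2) (Z$2$1) (Z$2$2)"
  unfolding matB_def inverse_2x2_def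
  by (simp add: vec_eq_iff forall_2 matrix_matrix_mult_def mat_def sum_2 conj_ac)

lemma matA_inverse:
  fixes a b c d :: "'a::ring_1"
  assumes "inverse_2x2 (a - 1) (b - 1) (c - 1) (d - 1) s t u v"
  defines "X \<equiv> vector [vector [1 + s + t + u + v, - s - u, - t - v],
                        vector [- s - t, s, t],
                        vector [- u - v, u, v]] :: 'a^3^3"
  shows "matA a b c d ** X = mat 1" and "X ** matA a b c d = mat 1"
proof -
  obtain p q r w where "a = p + 1" "b = q + 1" "c = r + 1" "d = w + 1"
    by (metis diff_add_cancel)
  with assms show "matA a b c d ** X = mat 1" and "X ** matA a b c d = mat 1"
    unfolding X_def matA_def inverse_2x2_def
    by (simp_all add: vec_eq_iff forall_3 matrix_matrix_mult_def mat_def sum_3 algebra_simps)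
qed

lemma matA_inverse_lower_block:
  fixes a b c d :: "'a::ring_1" and Y :: "'a^3^3"
  assumes "matA a b c d ** Y = mat 1" and "Y ** matA a b c d = mat 1"
  shows "inverse_2x2 (a - 1) (b - 1) (c - 1) (d - 1) (Y$2$2) (Y$2$3) (Y$3$2) (Y$3$3)"
proof -
  have AY: "(matA a b c d ** Y) $ i $ j = mat 1 $ i $ j"
    and YA: "(Y ** matA a b c d) $ i $ j = mat 1 $ i $ j" for i j
    using assms by simp_all
  note entries = matA_def matrix_matrix_mult_def sum_3
  have row: "Y$1$j + Y$2$j + Y$3$j = mat 1 $ 1 $ j"
    "Y$1$j + a * Y$2$j + b * Y$3$j = mat 1 $ 2 $ j"
    "Y$1$j + c * Y$2$j + d * Y$3$j = mat 1 $ 3 $ j" for j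
    using AY[of 1 j] AY[of 2 j] AY[of 3 j] by (simp_all add: entries)
  have col: "Y$i$1 + Y$i$2 + Y$i$3 = mat 1 $ i $ 1"
    "Y$i$1 + Y$i$2 * a + Y$i$3 * c = mat 1 $ i $ 2"
    "Y$i$1 + Y$i$2 * b + Y$i$3 * d = mat 1 $ i $ 3" for i
    using YA[of i 1] YA[of i 2] YA[of i 3] by (simp_all add: entries)
  have left: "(x - 1) * Y$2$j + (y - 1) * Y$3$j = mat 1 $ k $ j - mat 1 $ 1 $ j"
    if "Y$1$j + x * Y$2$j + y * Y$3$j = mat 1 $ k $ j" for x y j k
  proof -
    have "(x - 1) * Y$2$j + (y - 1) * Y$3$j
        = (Y$1$j + x * Y$2$j + y * Y$3$j) - (Y$1$j + Y$2$j + Y$3$j)"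
      by (simp add: algebra_simps)
    with that row(1) show ?thesis by simp
  qed
  have right: "Y$i$2 * (x - 1) + Y$i$3 * (y - 1) = mat 1 $ i $ k - mat 1 $ i $ 1"
    if "Y$i$1 + Y$i$2 * x + Y$i$3 * y = mat 1 $ i $ k" for x y i k
  proof -
    have "Y$i$2 * (x - 1) + Y$i$3 * (y - 1)
        = (Y$i$1 + Y$i$2 * x + Y$i$3 * y) - (Y$i$1 + Y$i$2 + Y$i$3)"
      by (simp add: algebra_simps)
    with that col(1) show ?thesis by simp
  qed
  show ?thesis
    unfolding inverse_2x2_def
    using left[OF row(2)] left[OF row(3)] right[OF col(2)] right[OF col(3)]
    by (simp add: mat_def)
qed

theorem lemma5:
  fixes a b c d :: "'a::ring_1"
  shows "(invertible (matA a b c d) \<longleftrightarrow> invertible (matB a b c d))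
    \<and> (invertible (matB a b c d) \<longrightarrow>
        (let s = matrix_inv (matB a b c d) $ 1 $ 1;
             t = matrix_inv (matB a b c d) $ 1 $ 2;
             u = matrix_inv (matB a b c d) $ 2 $ 1;
             v = matrix_inv (matB a b c d) $ 2 $ 2
         in matrix_inv (matA a b c d) =
              vector [vector [1 + s + t + u + v, - s - u, - t - v],
                      vector [- s - t, s, t],
                      vector [- u - v, u, v]]
          \<and> (ring_invertible (a - 1) \<and> ring_invertible (b - 1)
              \<and> ring_invertible (c - 1) \<and> ring_invertible (d - 1) \<longrightarrow>
               ring_invertible ((a - 1) - (b - 1) * ring_inv (d - 1) * (c - 1))
             \<and> s = ring_inv ((a - 1) - (b - 1) * ring_inv (d - 1) * (c - 1))
             \<and> ring_invertible ((c - 1) - (d - 1) * ring_inv (b - 1) * (a - 1))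
             \<and> t = ring_inv ((c - 1) - (d - 1) * ring_inv (b - 1) * (a - 1))
             \<and> ring_invertible ((b - 1) - (a - 1) * ring_inv (c - 1) * (d - 1))
             \<and> u = ring_inv ((b - 1) - (a - 1) * ring_inv (c - 1) * (d - 1))
             \<and> ring_invertible ((d - 1) - (c - 1) * ring_inv (a - 1) * (b - 1))
             \<and> v = ring_inv ((d - 1) - (c - 1) * ring_inv (a - 1) * (b - 1)))))"
proof -
  let ?A = "matA a b c d" and ?B = "matB a b c d"
  let ?Z = "matrix_inv ?B"
  have inv: "inverse_2x2 (a - 1) (b - 1) (c - 1) (d - 1) (?Z$1$1) (?Z$1$2) (?Z$2$1) (?Z$2$2)"
    if "invertible ?B"
    using that matB_inverse_iff matrix_inv_left matrix_inv_right by blast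
  have invertible_iff: "invertible ?A \<longleftrightarrow> invertible ?B"
  proof
    assume "invertible ?A"
    then obtain Y where Y: "?A ** Y = mat 1" "Y ** ?A = mat 1" unfolding invertible_def by blast
    let ?Y' = "vector [vector [Y$2$2, Y$2$3], vector [Y$3$2, Y$3$3]] :: 'a^2^2"
    have "?B ** ?Y' = mat 1 \<and> ?Y' ** ?B = mat 1"
      using matA_inverse_lower_block[OF Y] matB_inverse_iff[of a b c d ?Y'] by simp
    then show "invertible ?B" unfolding invertible_def by blast
  next
    assume "invertible ?B"
    then show "invertible ?A" using matA_inverse[OF inv] unfolding invertible_def by blast
  qed
  note Schur = inverse_2x2_Schur[OF inv]
    inverse_2x2_Schur[OF inverse_2x2_swap_rows[OF inv]]
    inverse_2x2_Schur[OF inverse_2x2_swap_cols[OF inv]]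
    inverse_2x2_Schur[OF inverse_2x2_swap_rows[OF inverse_2x2_swap_cols[OF inv]]]
  show ?thesis
    unfolding Let_def using invertible_iff matrix_inv_eqI[OF matA_inverse[OF inv]]
    by (auto simp: Schur)
qed

end
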